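(* Let $G=(V,E)$ be an $n$-vertex finite simple undirected graph with distinct vertex IDs, whose neighborhood independence is bounded by a constant $c$, and let $K$ be a positive integer with $\delta(G)\ge K$. Then the procedure Efficient-VM run on $G$ with parameter $K$ terminates within $O(\log^* n + K^4)$ rounds.
   Context: $\Gamma(v)$ is the neighbor set of $v$, $\deg(v)=|\Gamma(v)|$, $\delta(G)=\min_v\deg(v)$. The neighborhood independence of $G$ is the maximum over $v$ of the size of an independent set contained in $\Gamma(v)$. Model: synchronous CONGEST model (in each round every vertex sends an $O(\log n)$-bit message to each neighbor and computes locally). Operation $K$-Next-Modulo$(v,\Gamma(v),K)$: list $\Gamma(v)\cup\{v\}$ in ascending ID order as $u_1,\dots,u_d$ ($d=\deg(v)+1$) with $v=u_i$; $v$ selects $u_{i+1},\dots,u_{i+K}$, indices cyclic modulo $d$. Procedure Efficient-VM$(G,K)$: (1) every vertex selects its $K$ neighbors by $K$-Next-Modulo (one round); let $G'=(V,E')$ with $E'$ the set of edges $\{v,u\}$ such that $v$ selected $u$, and $\Delta'$ its maximum degree; (2) compute a 2-hop coloring of $G'$ (vertices at distance at most $2$ in $G'$ get distinct colors) by running Linial's algorithm on $G'^2$, which uses $O(\Delta'^4)$ colors and $\log^* n+O(1)$ rounds; (3) process the color classes one per round in round-robin order, each active vertex distributing its backup data to the $K$ vertices it selected. *)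

theory Defs
  imports Main "HOL.Real"
begin

section \<open>Graphs: vertices are their (distinct, natural-number) IDs\<close>

definition simple_graph :: "nat set \<Rightarrow> (nat \<Rightarrow> nat \<Rightarrow> bool) \<Rightarrow> bool" where
  "simple_graph V E \<longleftrightarrow> finite V \<and> (\<forall>u v. E u v \<longrightarrow> u \<in> V \<and> v \<in> V)
     \<and> (\<forall>u v. E u v \<longrightarrow> E v u) \<and> (\<forall>v. \<not> E v v)"

definition nbrs :: "nat set \<Rightarrow> (nat \<Rightarrow> nat \<Rightarrow> bool) \<Rightarrow> nat \<Rightarrow> nat set" where
  "nbrs V E v = {u \<in> V. E v u}"

definition degree :: "nat set \<Rightarrow> (nat \<Rightarrow> nat \<Rightarrow> bool) \<Rightarrow> nat \<Rightarrow> nat" where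
  "degree V E v = card (nbrs V E v)"

definition independent :: "(nat \<Rightarrow> nat \<Rightarrow> bool) \<Rightarrow> nat set \<Rightarrow> bool" where
  "independent E S \<longleftrightarrow> (\<forall>u\<in>S. \<forall>w\<in>S. \<not> E u w)"

definition nbhd_independence :: "nat set \<Rightarrow> (nat \<Rightarrow> nat \<Rightarrow> bool) \<Rightarrow> nat" where
  "nbhd_independence V E =
     Max ({0} \<union> {card S | S v. v \<in> V \<and> S \<subseteq> nbrs V E v \<and> independent E S})"

text \<open>List nbrs(v) \<union> {v} in ascending ID order as u_1..u_d, v = u_i; select u_{i+1},...,u_{i+K}
  cyclically (0-based indices here).\<close>
definition next_modulo :: "nat set \<Rightarrow> (nat \<Rightarrow> nat \<Rightarrow> bool) \<Rightarrow> nat \<Rightarrow> nat \<Rightarrow> nat set" where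
  "next_modulo V E K v =
     (let L = sorted_list_of_set (insert v (nbrs V E v));
          d = length L;
          i = (THE i. i < d \<and> L ! i = v)
      in {L ! ((i + j) mod d) | j. 1 \<le> j \<and> j \<le> K})"

definition sel_edge :: "nat set \<Rightarrow> (nat \<Rightarrow> nat \<Rightarrow> bool) \<Rightarrow> nat \<Rightarrow> nat \<Rightarrow> nat \<Rightarrow> bool" where
  "sel_edge V E K u w \<longleftrightarrow> u \<in> V \<and> w \<in> V \<and>
     (w \<in> next_modulo V E K u \<or> u \<in> next_modulo V E K w)"

definition max_degree :: "nat set \<Rightarrow> (nat \<Rightarrow> nat \<Rightarrow> bool) \<Rightarrow> nat" where
  "max_degree V E = Max ({0} \<union> degree V E ` V)"

definition two_hop_coloring ::
    "nat set \<Rightarrow> (nat \<Rightarrow> nat \<Rightarrow> bool) \<Rightarrow> (nat \<Rightarrow> nat) \<Rightarrow> nat \<Rightarrow> bool" where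
  "two_hop_coloring V H col m \<longleftrightarrow> (\<forall>v\<in>V. col v < m) \<and>
     (\<forall>u\<in>V. \<forall>w\<in>V. u \<noteq> w \<and> (H u w \<or> (\<exists>x\<in>V. H u x \<and> H x w)) \<longrightarrow> col u \<noteq> col w)"

fun floor_log2 :: "nat \<Rightarrow> nat" where
  "floor_log2 n = (if n < 2 then 0 else Suc (floor_log2 (n div 2)))"

lemma floor_log2_less: "n \<ge> 2 \<Longrightarrow> floor_log2 n < n"
proof (induction n rule: less_induct)
  case (less n)
  show ?case
  proof (cases "n div 2 < 2")
    case True then show ?thesis using less.prems by simp
  next
    case False
    then have "floor_log2 (n div 2) < n div 2" using less by simp
    then show ?thesis using less.prems by simp
  qed
qed

function log_star :: "nat \<Rightarrow> nat" where
  "log_star n = (if n \<le> 1 then 0 else Suc (log_star (floor_log2 n)))"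
  by auto
termination
  by (relation "measure id") (auto simp: floor_log2_less simp del: floor_log2.simps)

text \<open>Step (1): one round. Step (2): Linial's algorithm on G'^2, taking log* n + b rounds
  (b the constant of Linial's algorithm) and producing a 2-hop coloring with m colors.
  Step (3): one round per color class, round-robin: m rounds.\<close>
definition efficient_vm_rounds :: "nat \<Rightarrow> nat \<Rightarrow> nat \<Rightarrow> nat" where
  "efficient_vm_rounds n b m = 1 + (log_star n + b) + m"

end

theory Submission
  imports Defs
begin

(* A vertex selects at most K others, so only the vertices that select u need counting.
   Let S be those selectors of u with ID below u (or those above u); they are neighbours of u.
   For s < x in S, x lies strictly between s and u in the cyclic ID order, so x is one of the
   fewer than K members of the closed neighbourhood of s that s skipped before reaching u.
   Hence every s in S has fewer than K larger neighbours in S, and a greedy sweep in increasing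
   order finds an independent subset of S, inside Gamma(u), with at least |S|/K elements;
   so |S| <= K c. Thus G' has maximum degree at most (2c + 1) K, and the O(Delta'^4) colour
   classes cost O(K^4) rounds. *)

definition cyclically_between :: "nat \<Rightarrow> nat \<Rightarrow> nat \<Rightarrow> bool" where
  "cyclically_between w x u \<longleftrightarrow> (if w < u then w < x \<and> x < u else w < x \<or> x < u)"

lemma cyclically_between_strict_mono_on:
  assumes "strict_mono_on S f" "w \<in> S" "x \<in> S" "u \<in> S"
  shows "cyclically_between (f w) (f x) (f u) \<longleftrightarrow> cyclically_between w x u"
  using assms by (simp add: cyclically_between_def strict_mono_on_less)

definition cyclic_offset :: "nat \<Rightarrow> nat \<Rightarrow> nat \<Rightarrow> nat" where
  "cyclic_offset d i p = (p + d - i) mod d"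

lemma cyclically_between_iff_cyclic_offset:
  assumes "i < d" "p < d" "q < d" "q \<noteq> i"
  shows "cyclically_between i p q \<longleftrightarrow>
    0 < cyclic_offset d i p \<and> cyclic_offset d i p < cyclic_offset d i q"
  using assms by (auto simp: cyclically_between_def cyclic_offset_def mod_if)

lemma cyclic_offset_shift:
  assumes "i < d" "r < d"
  shows "cyclic_offset d i ((i + r) mod d) = r"
  using assms by (auto simp: cyclic_offset_def mod_if)

lemma shift_cyclic_offset:
  assumes "i < d" "p < d"
  shows "(i + cyclic_offset d i p) mod d = p"
  using assms by (auto simp: cyclic_offset_def mod_if)

lemma card_cyclically_between_nth_less:
  assumes sorted: "sorted_wrt (<) L" and i: "i < length L"
    and ne: "(i + j) mod length L \<noteq> i"
  shows "card {x \<in> set L. cyclically_between (L ! i) x (L ! ((i + j) mod length L))} < j"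
proof -
  define d where "d = length L"
  define r where "r = j mod d"
  have i: "i < d" using i by (simp add: d_def)
  then have r: "r < d" "r \<le> j" by (simp_all add: r_def)
  have q: "(i + j) mod d = (i + r) mod d" by (simp add: r_def mod_add_right_eq)
  have "r \<noteq> 0"
  proof
    assume "r = 0"
    then have "(i + j) mod d = i" using q i by simp
    then show False using ne by (simp add: d_def)
  qed
  have mono: "strict_mono_on {..<d} (nth L)"
    using sorted by (auto simp: d_def intro!: strict_mono_onI sorted_wrt_nth_less)
  have "{x \<in> set L. cyclically_between (L ! i) x (L ! ((i + r) mod d))}
          \<subseteq> (\<lambda>k. L ! ((i + k) mod d)) ` {0<..<r}"
  proof
    fix x assume x: "x \<in> {x \<in> set L. cyclically_between (L ! i) x (L ! ((i + r) mod d))}"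
    then obtain p where p: "p < d" "x = L ! p" by (auto simp: d_def in_set_conv_nth)
    have "(i + r) mod d < d" using i by simp
    then have "cyclically_between i p ((i + r) mod d)"
      using x p i cyclically_between_strict_mono_on[OF mono] by simp
    moreover have "(i + r) mod d \<noteq> i" using ne q by (simp add: d_def)
    ultimately have "cyclic_offset d i p \<in> {0<..<r}"
      using cyclically_between_iff_cyclic_offset[of i d p "(i + r) mod d"]
        cyclic_offset_shift[OF i r(1)] p i
      by simp
    moreover have "x = L ! ((i + cyclic_offset d i p) mod d)"
      using shift_cyclic_offset[OF i p(1)] p by simp
    ultimately show "x \<in> (\<lambda>k. L ! ((i + k) mod d)) ` {0<..<r}" by blast
  qed
  then have "card {x \<in> set L. cyclically_between (L ! i) x (L ! ((i + r) mod d))}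
      \<le> card ((\<lambda>k. L ! ((i + k) mod d)) ` {0<..<r})"
    by (rule card_mono[rotated]) simp
  also have "\<dots> \<le> r - 1"
    using card_image_le[of "{0<..<r}" "\<lambda>k. L ! ((i + k) mod d)"] by simp
  finally show ?thesis using \<open>r \<noteq> 0\<close> r q by (simp add: d_def)
qed

lemma finite_nbrs: "finite V \<Longrightarrow> finite (nbrs V E v)"
  by (simp add: nbrs_def)

lemma next_modulo_eq_image:
  assumes "finite V"
  obtains L i where "sorted_wrt (<) L" "set L = insert w (nbrs V E w)" "i < length L" "L ! i = w"
    "next_modulo V E K w = (\<lambda>j. L ! ((i + j) mod length L)) ` {1..K}"
proof -
  define L where "L = sorted_list_of_set (insert w (nbrs V E w))"
  have set_L: "set L = insert w (nbrs V E w)"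
    unfolding L_def by (rule set_sorted_list_of_set) (simp add: assms finite_nbrs)
  have "distinct L" by (simp add: L_def)
  moreover have "w \<in> set L" using set_L by simp
  ultimately have "\<exists>!i. i < length L \<and> L ! i = w" by (rule distinct_Ex1)
  let ?i = "THE i. i < length L \<and> L ! i = w"
  have "?i < length L \<and> L ! ?i = w"
    using theI'[OF \<open>\<exists>!i. i < length L \<and> L ! i = w\<close>] .
  moreover have "next_modulo V E K w = (\<lambda>j. L ! ((?i + j) mod length L)) ` {1..K}"
    by (auto simp: next_modulo_def L_def Let_def)
  moreover have "sorted_wrt (<) L" by (simp add: L_def)
  ultimately show thesis using that set_L by blast
qed

lemma next_modulo_subset:
  assumes "finite V"
  shows "next_modulo V E K w \<subseteq> insert w (nbrs V E w)"
proof -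
  obtain L i where L: "set L = insert w (nbrs V E w)" and i: "i < length L"
    and nm: "next_modulo V E K w = (\<lambda>j. L ! ((i + j) mod length L)) ` {1..K}"
    using next_modulo_eq_image[OF assms] by metis
  have "0 < length L" using i by linarith
  then have "next_modulo V E K w \<subseteq> set L" using nm by (auto intro!: nth_mem)
  then show ?thesis using L by simp
qed

lemma card_next_modulo_le:
  assumes "finite V"
  shows "card (next_modulo V E K w) \<le> K"
proof -
  obtain f where "next_modulo V E K w = f ` {1..K}"
    using next_modulo_eq_image[OF assms] by metis
  then show ?thesis using card_image_le[of "{1..K}" f] by simp
qed

lemma card_cyclically_between_selected:
  assumes "finite V" "u \<in> next_modulo V E K w" "u \<noteq> w"
  shows "card {x \<in> insert w (nbrs V E w). cyclically_between w x u} < K"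
proof -
  obtain L i where L: "sorted_wrt (<) L" "set L = insert w (nbrs V E w)"
    and i: "i < length L" "L ! i = w"
    and nm: "next_modulo V E K w = (\<lambda>j. L ! ((i + j) mod length L)) ` {1..K}"
    using next_modulo_eq_image[OF assms(1)] .
  obtain j where j: "j \<le> K" "u = L ! ((i + j) mod length L)"
    using assms(2) nm by auto
  have "(i + j) mod length L \<noteq> i" using assms(3) i j by auto
  then have "card {x \<in> set L. cyclically_between (L ! i) x (L ! ((i + j) mod length L))} < j"
    using card_cyclically_between_nth_less L(1) i(1) by blast
  then show ?thesis using L(2) i j by simp
qed

lemma exists_large_independent_subset:
  fixes S :: "nat set"
  assumes "finite S" and sym: "\<And>x y. E x y \<Longrightarrow> E y x" and irrefl: "\<And>x. \<not> E x x"
    and "\<forall>s\<in>S. card {x \<in> S. s < x \<and> E s x} < K"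
  shows "\<exists>I \<subseteq> S. independent E I \<and> card S \<le> K * card I"
  using assms(1,4)
proof (induction S rule: finite_psubset_induct)
  case (psubset S)
  show ?case
  proof (cases "S = {}")
    case True
    then show ?thesis by (simp add: independent_def)
  next
    case False
    define s where "s = Min S"
    define N where "N = {x \<in> S. s < x \<and> E s x}"
    have s: "s \<in> S" "\<forall>x\<in>S. s \<le> x" using psubset.hyps False by (simp_all add: s_def)
    have N: "card N < K" using psubset.prems s(1) by (simp add: N_def)
    have sparse: "\<forall>t\<in>S - insert s N. card {x \<in> S - insert s N. t < x \<and> E t x} < K"
    proof
      fix t assume t: "t \<in> S - insert s N"
      have "card {x \<in> S - insert s N. t < x \<and> E t x} \<le> card {x \<in> S. t < x \<and> E t x}"
        using psubset.hyps by (intro card_mono) auto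
      moreover have "card {x \<in> S. t < x \<and> E t x} < K" using psubset.prems t by blast
      ultimately show "card {x \<in> S - insert s N. t < x \<and> E t x} < K" by linarith
    qed
    have "S - insert s N \<subset> S" using s(1) by auto
    from psubset.IH[OF this sparse] obtain I where I: "I \<subseteq> S - insert s N" "independent E I"
      "card (S - insert s N) \<le> K * card I"
      by blast
    have "\<not> E s x" if "x \<in> I" for x
      using that I(1) s(2) by (auto simp: N_def less_le)
    then have "independent E (insert s I)"
      using I(2) sym irrefl unfolding independent_def by blast
    moreover have "card S \<le> K * card (insert s I)"
    proof -
      have fin_N: "finite N" using psubset.hyps by (simp add: N_def)
      have "card S = card ((S - insert s N) \<union> insert s N)"
        using s(1) by (auto simp: N_def intro!: arg_cong[where f = card])
      also have "\<dots> \<le> card (S - insert s N) + card (insert s N)" by (rule card_Un_le)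
      also have "\<dots> \<le> K * card I + K"
        using I(3) N fin_N by (simp add: card_insert_if)
      also have "\<dots> = K * card (insert s I)"
      proof -
        have "finite I" "s \<notin> I" using I(1) psubset.hyps by (auto intro: finite_subset)
        then show ?thesis by simp
      qed
      finally show ?thesis .
    qed
    ultimately show ?thesis using I(1) s(1) by (intro exI[of _ "insert s I"]) auto
  qed
qed

lemma card_le_nbhd_independence:
  assumes "finite V" "v \<in> V" "S \<subseteq> nbrs V E v" "independent E S"
  shows "card S \<le> nbhd_independence V E"
proof -
  let ?M = "{0} \<union> {card S | S v. v \<in> V \<and> S \<subseteq> nbrs V E v \<and> independent E S}"
  have "?M \<subseteq> {..card V}"
    using assms(1) by (auto simp: nbrs_def intro!: card_mono)
  then have "finite ?M" by (rule finite_subset) simp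
  moreover have "card S \<in> ?M" using assms by blast
  ultimately show ?thesis unfolding nbhd_independence_def by (rule Max_ge)
qed

lemma card_selectors_le:
  assumes sg: "simple_graph V E" and u: "u \<in> V"
    and S: "S \<subseteq> {w \<in> V. w \<noteq> u \<and> u \<in> next_modulo V E K w}"
    and arc: "\<And>s x. s \<in> S \<Longrightarrow> x \<in> S \<Longrightarrow> s < x \<Longrightarrow> cyclically_between s x u"
  shows "card S \<le> K * nbhd_independence V E"
proof -
  have fin: "finite V" and sym: "\<And>x y. E x y \<Longrightarrow> E y x" and irrefl: "\<And>x. \<not> E x x"
    using sg by (simp_all add: simple_graph_def)
  have S_nbrs: "S \<subseteq> nbrs V E u"
    using S next_modulo_subset[OF fin] sym by (fastforce simp: nbrs_def)
  then have "finite S" using fin by (meson finite_nbrs finite_subset)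
  moreover have "\<forall>s\<in>S. card {x \<in> S. s < x \<and> E s x} < K"
  proof
    fix s assume s: "s \<in> S"
    have "{x \<in> S. s < x \<and> E s x} \<subseteq> {x \<in> insert s (nbrs V E s). cyclically_between s x u}"
      using arc s S by (auto simp: nbrs_def)
    then have "card {x \<in> S. s < x \<and> E s x}
        \<le> card {x \<in> insert s (nbrs V E s). cyclically_between s x u}"
      by (rule card_mono[rotated]) (simp add: fin finite_nbrs)
    also have "\<dots> < K"
      using s S by (intro card_cyclically_between_selected[OF fin]) auto
    finally show "card {x \<in> S. s < x \<and> E s x} < K" .
  qed
  ultimately obtain I where I: "I \<subseteq> S" "independent E I" "card S \<le> K * card I"
    using exists_large_independent_subset[of S E K, OF _ sym irrefl] by blast
  have "card I \<le> nbhd_independence V E"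
    using card_le_nbhd_independence[OF fin u _ I(2)] I(1) S_nbrs by blast
  then show ?thesis using I(3) by (meson le_trans mult_le_mono2)
qed

lemma degree_sel_edge_le:
  assumes sg: "simple_graph V E" and u: "u \<in> V"
  shows "degree V (sel_edge V E K) u \<le> (2 * nbhd_independence V E + 1) * K"
proof -
  have fin: "finite V" using sg by (simp add: simple_graph_def)
  define below where "below = {w \<in> V. w \<noteq> u \<and> u \<in> next_modulo V E K w \<and> w < u}"
  define above where "above = {w \<in> V. w \<noteq> u \<and> u \<in> next_modulo V E K w \<and> u < w}"
  have "nbrs V (sel_edge V E K) u \<subseteq> next_modulo V E K u \<union> below \<union> above"
    by (auto simp: nbrs_def sel_edge_def below_def above_def) (metis linorder_neqE_nat)
  then have "degree V (sel_edge V E K) u \<le> card (next_modulo V E K u \<union> below \<union> above)"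
    unfolding degree_def by (rule card_mono[rotated]) (simp add: fin finite_nbrs below_def above_def
        finite_subset[OF next_modulo_subset[OF fin]])
  also have "\<dots> \<le> card (next_modulo V E K u) + card below + card above"
    by (meson card_Un_le add_le_mono1 le_trans)
  also have "\<dots> \<le> K + K * nbhd_independence V E + K * nbhd_independence V E"
  proof -
    have "card below \<le> K * nbhd_independence V E"
      by (rule card_selectors_le[OF sg u]) (auto simp: below_def cyclically_between_def)
    moreover have "card above \<le> K * nbhd_independence V E"
      by (rule card_selectors_le[OF sg u]) (auto simp: above_def cyclically_between_def)
    ultimately show ?thesis using card_next_modulo_le[OF fin, of E K u] by linarith
  qed
  finally show ?thesis by (simp add: algebra_simps)
qed

lemma max_degree_sel_edge_le:
  assumes "simple_graph V E"
  shows "max_degree V (sel_edge V E K) \<le> (2 * nbhd_independence V E + 1) * K"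
  using assms degree_sel_edge_le[OF assms]
  by (simp add: max_degree_def simple_graph_def)

lemma efficient_vm_rounds_le:
  assumes "m \<le> A * K ^ 4" "1 \<le> K"
  shows "efficient_vm_rounds n b m \<le> (1 + b + A) * (log_star n + K ^ 4)"
proof -
  have "1 + b \<le> (1 + b) * K ^ 4"
    using mult_le_mono2[of 1 "K ^ 4" "1 + b"] assms(2) by (simp only: mult_1_right one_le_power)
  then have "efficient_vm_rounds n b m \<le> log_star n + (1 + b) * K ^ 4 + A * K ^ 4"
    using assms(1) unfolding efficient_vm_rounds_def by linarith
  also have "\<dots> \<le> (1 + b + A) * (log_star n + K ^ 4)"
    by (simp add: algebra_simps)
  finally show ?thesis .
qed

theorem lemma2:
  fixes c a b :: nat
  shows "\<exists>C::real. \<forall>(V::nat set) E K col m.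
     simple_graph V E \<and> V \<noteq> {} \<and> nbhd_independence V E \<le> c \<and> K \<ge> 1 \<and>
     (\<forall>v\<in>V. degree V E v \<ge> K) \<and>
     two_hop_coloring V (sel_edge V E K) col m \<and>
     m \<le> a * (max_degree V (sel_edge V E K)) ^ 4
     \<longrightarrow> real (efficient_vm_rounds (card V) b m)
           \<le> C * (real (log_star (card V)) + real K ^ 4)"
proof (intro exI[of _ "real (1 + b + a * (2 * c + 1) ^ 4)"] allI impI, elim conjE)
  fix V :: "nat set" and E K col m
  assume sg: "simple_graph V E" and c: "nbhd_independence V E \<le> c" and K: "K \<ge> 1"
    and m: "m \<le> a * (max_degree V (sel_edge V E K)) ^ 4"
  have "max_degree V (sel_edge V E K) \<le> (2 * c + 1) * K"
    using max_degree_sel_edge_le[OF sg, of K] c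
    by (meson add_le_mono1 le_trans mult_le_mono1 mult_le_mono2)
  then have "max_degree V (sel_edge V E K) ^ 4 \<le> ((2 * c + 1) * K) ^ 4"
    by (rule power_mono) simp
  then have "a * max_degree V (sel_edge V E K) ^ 4 \<le> a * (2 * c + 1) ^ 4 * K ^ 4"
    unfolding mult.assoc power_mult_distrib[symmetric] by (rule mult_le_mono2)
  then have "m \<le> a * (2 * c + 1) ^ 4 * K ^ 4" using m by linarith
  then have "efficient_vm_rounds (card V) b m
      \<le> (1 + b + a * (2 * c + 1) ^ 4) * (log_star (card V) + K ^ 4)"
    using K by (rule efficient_vm_rounds_le)
  then show "real (efficient_vm_rounds (card V) b m)
      \<le> real (1 + b + a * (2 * c + 1) ^ 4) * (real (log_star (card V)) + real K ^ 4)"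
    by (rule of_nat_mono[THEN ord_le_eq_trans]) (simp only: of_nat_mult of_nat_add of_nat_power)
qed

end
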